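(* A connected graph $G$ on $n$ vertices satisfies $\operatorname{cdim}(G)=n-1$ if and only if $G$ is uniformly connected, i.e., there is an integer $k$ such that $\kappa(v,w)=k$ for all pairs of distinct vertices $v,w\in V(G)$.
   Context: All graphs are finite, simple, undirected and nonempty. For distinct vertices $v,w$, $\kappa(v,w)$ is the maximum number of internally vertex-disjoint $v$–$w$ paths (an edge $vw$ counts as one such path); $\kappa(v,v)=\infty$. For an ordered vertex set $W=(w_1,\ldots,w_k)$, $r_G(v,W)=[\kappa(v,w_1),\ldots,\kappa(v,w_k)]$. $W$ is resolving if $r_G(v_1,W)=r_G(v_2,W)$ implies $v_1=v_2$ (the empty set is resolving for the one-vertex graph). The connectivity dimension $\operatorname{cdim}(G)$ is the minimum cardinality of a resolving set. *)

theory Defs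
  imports Main "HOL-Library.Extended_Nat"
begin

definition simple_graph :: "'a set \<Rightarrow> 'a set set \<Rightarrow> bool" where
  "simple_graph V E \<longleftrightarrow> finite V \<and> V \<noteq> {} \<and>
     (\<forall>e\<in>E. \<exists>u v. u \<noteq> v \<and> u \<in> V \<and> v \<in> V \<and> e = {u, v})"

definition is_path :: "'a set \<Rightarrow> 'a set set \<Rightarrow> 'a \<Rightarrow> 'a \<Rightarrow> 'a list \<Rightarrow> bool" where
  "is_path V E v w p \<longleftrightarrow> length p \<ge> 2 \<and> hd p = v \<and> last p = w \<and> distinct p \<and>
     set p \<subseteq> V \<and> (\<forall>i. Suc i < length p \<longrightarrow> {p ! i, p ! Suc i} \<in> E)"

definition interior :: "'a list \<Rightarrow> 'a set" where
  "interior p = set (butlast (tl p))"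

definition disjoint_paths :: "'a set \<Rightarrow> 'a set set \<Rightarrow> 'a \<Rightarrow> 'a \<Rightarrow> 'a list set \<Rightarrow> bool" where
  "disjoint_paths V E v w P \<longleftrightarrow> (\<forall>p\<in>P. is_path V E v w p) \<and>
     (\<forall>p\<in>P. \<forall>q\<in>P. p \<noteq> q \<longrightarrow> interior p \<inter> interior q = {})"

definition kappa :: "'a set \<Rightarrow> 'a set set \<Rightarrow> 'a \<Rightarrow> 'a \<Rightarrow> enat" where
  "kappa V E v w = (if v = w then \<infinity>
     else enat (Max {card P | P. disjoint_paths V E v w P}))"

definition rep :: "'a set \<Rightarrow> 'a set set \<Rightarrow> 'a \<Rightarrow> 'a list \<Rightarrow> enat list" where
  "rep V E v W = map (kappa V E v) W"

definition resolving :: "'a set \<Rightarrow> 'a set set \<Rightarrow> 'a list \<Rightarrow> bool" where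
  "resolving V E W \<longleftrightarrow> distinct W \<and> set W \<subseteq> V \<and>
     (\<forall>v1\<in>V. \<forall>v2\<in>V. rep V E v1 W = rep V E v2 W \<longrightarrow> v1 = v2)"

definition cdim :: "'a set \<Rightarrow> 'a set set \<Rightarrow> nat" where
  "cdim V E = (LEAST k. \<exists>W. resolving V E W \<and> length W = k)"

definition connected_graph :: "'a set \<Rightarrow> 'a set set \<Rightarrow> bool" where
  "connected_graph V E \<longleftrightarrow> (\<forall>v\<in>V. \<forall>w\<in>V. v \<noteq> w \<longrightarrow> (\<exists>p. is_path V E v w p))"

definition uniformly_connected :: "'a set \<Rightarrow> 'a set set \<Rightarrow> bool" where
  "uniformly_connected V E \<longleftrightarrow>
     (\<exists>k::nat. \<forall>v\<in>V. \<forall>w\<in>V. v \<noteq> w \<longrightarrow> kappa V E v w = enat k)"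

end

theory Submission
  imports Defs
begin

text \<open>Reversing paths shows that \<open>kappa\<close> is symmetric. Since \<open>kappa v v = \<infinity>\<close> while
  \<open>kappa v w\<close> is finite for \<open>v \<noteq> w\<close>, every vertex of \<open>W\<close> is singled out by its own
  coordinate, so \<open>W\<close> resolves as soon as it separates the vertices outside \<open>W\<close>; in particular
  \<open>V\<close> minus one vertex resolves. In a uniformly connected graph no two vertices outside \<open>W\<close>
  are separated, so \<open>W\<close> misses at most one vertex. Otherwise symmetry yields distinct \<open>w, a, b\<close>
  with \<open>kappa w a \<noteq> kappa w b\<close>, and \<open>V - {a, b}\<close> resolves, giving \<open>cdim \<le> n - 2\<close>.\<close>

lemma is_path_rev: "is_path V E v w p \<Longrightarrow> is_path V E w v (rev p)"
proof -
  assume p: "is_path V E v w p"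
  have edges: "{rev p ! i, rev p ! Suc i} \<in> E" if i: "Suc i < length p" for i
  proof -
    define j where "j = length p - Suc (Suc i)"
    have "{p ! j, p ! Suc j} \<in> E" using p i by (simp add: is_path_def j_def)
    moreover have "rev p ! i = p ! Suc j" "rev p ! Suc i = p ! j"
      using i by (auto simp: rev_nth Suc_diff_Suc j_def)
    ultimately show ?thesis by (simp add: insert_commute)
  qed
  have "p \<noteq> []" using p by (auto simp: is_path_def)
  then show ?thesis using p edges by (auto simp: is_path_def hd_rev last_rev)
qed

lemma interior_rev: "interior (rev p) = interior p"
proof -
  have "tl (rev p) = rev (butlast p)" by (metis butlast_rev rev_rev_ident)
  then show ?thesis by (simp add: interior_def butlast_tl)
qed

lemma disjoint_paths_rev: "disjoint_paths V E v w P \<Longrightarrow> disjoint_paths V E w v (rev ` P)"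
  unfolding disjoint_paths_def by (auto simp: is_path_rev interior_rev)

lemma disjoint_paths_cards_subset:
  "{card P | P. disjoint_paths V E v w P} \<subseteq> {card P | P. disjoint_paths V E w v P}"
proof
  fix c assume "c \<in> {card P | P. disjoint_paths V E v w P}"
  then obtain P where P: "disjoint_paths V E v w P" "c = card P" by auto
  then have "c = card (rev ` P)" by (simp add: card_image)
  with disjoint_paths_rev[OF P(1)] show "c \<in> {card P | P. disjoint_paths V E w v P}" by blast
qed

lemma kappa_commute: "kappa V E v w = kappa V E w v"
  unfolding kappa_def
  using disjoint_paths_cards_subset[of V E v w] disjoint_paths_cards_subset[of V E w v] by auto

lemma kappa_eq_infinity_iff: "kappa V E v w = \<infinity> \<longleftrightarrow> v = w"
  by (simp add: kappa_def)

lemma resolving_iff_outside: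
  "resolving V E W \<longleftrightarrow> distinct W \<and> set W \<subseteq> V \<and>
     (\<forall>v1\<in>V - set W. \<forall>v2\<in>V - set W. rep V E v1 W = rep V E v2 W \<longrightarrow> v1 = v2)"
proof -
  have "v1 = v2" if "v1 \<in> set W" "rep V E v1 W = rep V E v2 W" for v1 v2
  proof -
    have "kappa V E v2 v1 = kappa V E v1 v1" using that by (simp add: rep_def)
    then show ?thesis by (metis kappa_eq_infinity_iff)
  qed
  then show ?thesis unfolding resolving_def by (metis Diff_iff)
qed

lemma cdim_le: "resolving V E W \<Longrightarrow> cdim V E \<le> length W"
  unfolding cdim_def by (rule Least_le) blast

lemma resolving_if_separating:
  assumes "finite V" "S \<subseteq> V"
    and separates: "\<And>v1 v2. v1 \<in> V - S \<Longrightarrow> v2 \<in> V - S \<Longrightarrow> v1 \<noteq> v2 \<Longrightarrow>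
                      \<exists>w\<in>S. kappa V E v1 w \<noteq> kappa V E v2 w"
  obtains W where "resolving V E W" "length W = card S"
proof -
  obtain W where W: "distinct W" "set W = S"
    using finite_distinct_list finite_subset assms(1,2) by metis
  have "rep V E v1 W \<noteq> rep V E v2 W" if "v1 \<in> V - S" "v2 \<in> V - S" "v1 \<noteq> v2" for v1 v2
    using separates[OF that] W(2) by (auto simp: rep_def)
  then have "resolving V E W" using W assms(2) by (auto simp: resolving_iff_outside)
  with W show ?thesis using that distinct_card by metis
qed

lemma cdim_le_card_if_separating:
  assumes "finite V" "S \<subseteq> V"
    and "\<And>v1 v2. v1 \<in> V - S \<Longrightarrow> v2 \<in> V - S \<Longrightarrow> v1 \<noteq> v2 \<Longrightarrow>
           \<exists>w\<in>S. kappa V E v1 w \<noteq> kappa V E v2 w"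
  shows "cdim V E \<le> card S"
  using resolving_if_separating[OF assms] cdim_le by metis

lemma cdim_attained:
  assumes "finite V"
  obtains W where "resolving V E W" "length W = cdim V E"
proof -
  obtain W where "resolving V E W" using resolving_if_separating[OF assms order_refl] by auto
  then show ?thesis
    using LeastI_ex[of "\<lambda>k. \<exists>W. resolving V E W \<and> length W = k"] that
    unfolding cdim_def by blast
qed

lemma cdim_le_card_minus_one:
  assumes "finite V" "V \<noteq> {}"
  shows "cdim V E \<le> card V - 1"
proof -
  obtain x where "x \<in> V" using assms(2) by blast
  then have "cdim V E \<le> card (V - {x})"
    using assms(1) by (intro cdim_le_card_if_separating) auto
  then show ?thesis using \<open>x \<in> V\<close> assms(1) by simp
qed

lemma cdim_le_card_minus_two:
  assumes "finite V" "w \<in> V" "a \<in> V" "b \<in> V" "w \<noteq> a" "w \<noteq> b"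
    and "kappa V E w a \<noteq> kappa V E w b"
  shows "cdim V E \<le> card V - 2"
proof -
  have "a \<noteq> b" using assms(7) by blast
  have "kappa V E a w \<noteq> kappa V E b w" using assms(7) by (simp add: kappa_commute)
  have "cdim V E \<le> card (V - {a, b})"
  proof (rule cdim_le_card_if_separating)
    fix v1 v2 assume "v1 \<in> V - (V - {a, b})" "v2 \<in> V - (V - {a, b})" "v1 \<noteq> v2"
    then have "v1 = a \<and> v2 = b \<or> v1 = b \<and> v2 = a" by auto
    then have "kappa V E v1 w \<noteq> kappa V E v2 w"
      using \<open>kappa V E a w \<noteq> kappa V E b w\<close> by auto
    then show "\<exists>u\<in>V - {a, b}. kappa V E v1 u \<noteq> kappa V E v2 u" using assms(2,5,6) by blast
  qed (use assms(1) in auto)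
  then show ?thesis using assms(1,3,4) \<open>a \<noteq> b\<close> by (simp add: card_Diff_subset)
qed

lemma card_le_Suc_length_if_uniformly_connected:
  assumes "uniformly_connected V E" "finite V" "resolving V E W"
  shows "card V \<le> Suc (length W)"
proof (rule ccontr)
  assume "\<not> ?thesis"
  moreover have W: "distinct W" "set W \<subseteq> V" using assms(3) by (auto simp: resolving_def)
  ultimately have "card (V - set W) \<ge> 2"
    using assms(2) by (simp add: card_Diff_subset distinct_card)
  then obtain v1 v2 where v: "v1 \<in> V - set W" "v2 \<in> V - set W" "v1 \<noteq> v2"
    using card_le_Suc0_iff_eq[of "V - set W"] assms(2) by auto
  obtain k where k: "\<And>v w. v \<in> V \<Longrightarrow> w \<in> V \<Longrightarrow> v \<noteq> w \<Longrightarrow> kappa V E v w = enat k"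
    using assms(1) by (auto simp: uniformly_connected_def)
  have "rep V E v1 W = rep V E v2 W"
    unfolding rep_def using W(2) v by (intro map_cong refl) (metis DiffE k subsetD)
  then show False using assms(3) v by (auto simp: resolving_def)
qed

lemma uniformly_connected_if_kappa_locally_constant:
  assumes const: "\<And>w a b. w \<in> V \<Longrightarrow> a \<in> V \<Longrightarrow> b \<in> V \<Longrightarrow> w \<noteq> a \<Longrightarrow> w \<noteq> b \<Longrightarrow>
                    kappa V E w a = kappa V E w b"
  shows "uniformly_connected V E"
proof (cases "\<exists>a\<in>V. \<exists>b\<in>V. a \<noteq> b")
  case True
  then obtain a b where ab: "a \<in> V" "b \<in> V" "a \<noteq> b" by blast
  then obtain k where k: "kappa V E a b = enat k"
    by (cases "kappa V E a b") (auto simp: kappa_eq_infinity_iff)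
  have "kappa V E v u = kappa V E a b" if "v \<in> V" "u \<in> V" "v \<noteq> u" for v u
  proof -
    have "kappa V E a b = kappa V E a v" if "v \<noteq> a" "v \<in> V" for v
      using const[of a b v] ab that by auto
    moreover have "kappa V E v a = kappa V E v u" if "v \<noteq> a" "u \<noteq> v" "u \<in> V" "v \<in> V" for u v
      using const[of v a u] ab that by auto
    ultimately show ?thesis
      using that ab by (metis kappa_commute)
  qed
  then show ?thesis using k unfolding uniformly_connected_def by metis
qed (auto simp: uniformly_connected_def)

theorem mainTheorem3:
  fixes V :: "'a set" and E :: "'a set set" and n :: nat
  assumes "simple_graph V E"
    and "connected_graph V E"
    and "card V = n"
  shows "cdim V E = n - 1 \<longleftrightarrow> uniformly_connected V E"
proof
  have fin: "finite V" and "V \<noteq> {}" using assms(1) by (auto simp: simple_graph_def)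
  then have upper: "cdim V E \<le> n - 1" using cdim_le_card_minus_one assms(3) by blast
  show "cdim V E = n - 1 \<Longrightarrow> uniformly_connected V E"
  proof (rule ccontr)
    assume "cdim V E = n - 1" "\<not> uniformly_connected V E"
    then obtain w a b where wab: "w \<in> V" "a \<in> V" "b \<in> V" "w \<noteq> a" "w \<noteq> b"
      "kappa V E w a \<noteq> kappa V E w b"
      using uniformly_connected_if_kappa_locally_constant by metis
    have "card {w, a, b} \<le> n" using wab card_mono[OF fin, of "{w, a, b}"] assms(3) by simp
    moreover have "a \<noteq> b" using wab(6) by blast
    ultimately have "3 \<le> n" using wab by simp
    then show False using cdim_le_card_minus_two[OF fin wab] \<open>cdim V E = n - 1\<close> assms(3)
      by linarith
  qed
  show "uniformly_connected V E \<Longrightarrow> cdim V E = n - 1"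
  proof -
    assume "uniformly_connected V E"
    moreover obtain W where "resolving V E W" "length W = cdim V E"
      using cdim_attained[OF fin] by blast
    ultimately have "n - 1 \<le> cdim V E"
      using card_le_Suc_length_if_uniformly_connected fin assms(3) by fastforce
    then show ?thesis using upper by simp
  qed
qed

end
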